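(* Let $\mathcal{S}\subset\mathbb{R}^n$ be compact convex with $\|x\|\le D$ on $\mathcal{S}$ ($D\ge1$), and let $f_1,\dots,f_T:\mathcal{S}\to\mathbb{R}$ be convex, differentiable, $\alpha$-exp-concave, with $\|\nabla f_t\|\le G$ on $\mathcal{S}$, and $T\ge2$. Let $\eta_i=\frac12\frac{\log T}{T\sqrt{2D}}2^{i-1}$, $N=\lceil\frac12\log_2(\frac{2DT^2}{\log^2T})\rceil+1$ and $\mathcal{H}=\{\gamma_i=1-\eta_i: i=1,\dots,N\}$, ordered so that $\gamma_1\ge\dots\ge\gamma_N$. For each $\gamma\in\mathcal{H}$ run a copy $A^\gamma$ of the Discounted Online Newton Step with discount factor $\gamma$ (with $\theta^\gamma_1\in\mathcal{S}$, $P_0=I$, $P_t=\gamma P_{t-1}+\nabla f_t(\theta_t^\gamma)\nabla f_t(\theta_t^\gamma)^\top$, $\theta^\gamma_{t+1}=\operatorname{argmin}_{z\in\mathcal{S}}(z-y)^\top P_t(z-y)$ with $y=\theta^\gamma_t-\frac1{\eta}P_t^{-1}\nabla f_t(\theta^\gamma_t)$, and step parameter $\eta\le\frac12\min\{\frac1{4GD},\alpha\}$), producing $\theta_t^\gamma$. Set initial weights $w_1^{\gamma_i}=\frac{C}{i(i+1)}$ with $C=1+1/|\mathcal{H}|$, play $\theta_t=\sum_{\gamma\in\mathcal{H}}w_t^\gamma\theta_t^\gamma$, and update $$w_{t+1}^\gamma=\frac{w_t^\gamma\exp(-\lambda f_t(\theta_t^\gamma))}{\sum_{\mu\in\mathcal{H}}w_t^\mu\exp(-\lambda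 f_t(\theta_t^\mu))}$$ with $\lambda=\alpha$. Then for any comparator sequence $z_1,\dots,z_T\in\mathcal{S}$ with $\sum_{t=2}^T\|z_t-z_{t-1}\|\le V$, $$\sum_{t=1}^T\big(f_t(\theta_t)-f_t(z_t)\big)\le O(\max\{\log T,\sqrt{TV}\}).$$
   Context: $\alpha$-exp-concave means $e^{-\alpha f_t}$ is concave on $\mathcal{S}$. $O(\cdot)$ hides constants depending only on $n,\alpha,G,D$ and the step parameter $\eta$. *)

theory Defs
  imports "HOL-Analysis.Analysis"
begin

definition dons_eta :: "nat \<Rightarrow> real \<Rightarrow> nat \<Rightarrow> real" where
  "dons_eta T D i = (1/2) * (ln (real T) / (real T * sqrt (2 * D))) * 2 ^ (i - 1)"

definition dons_gamma :: "nat \<Rightarrow> real \<Rightarrow> nat \<Rightarrow> real" where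
  "dons_gamma T D i = 1 - dons_eta T D i"

definition dons_N :: "nat \<Rightarrow> real \<Rightarrow> nat" where
  "dons_N T D = nat \<lceil>(1/2) * log 2 (2 * D * (real T)^2 / (ln (real T))^2)\<rceil> + 1"

definition outer :: "real ^ 'n \<Rightarrow> real ^ 'n ^ 'n" where
  "outer v = (\<chi> i j. v $ i * v $ j)"

fun dons_P :: "real \<Rightarrow> (nat \<Rightarrow> real ^ 'n \<Rightarrow> real ^ 'n) \<Rightarrow> (nat \<Rightarrow> real ^ 'n)
    \<Rightarrow> nat \<Rightarrow> real ^ 'n ^ 'n" where
  "dons_P \<gamma> g th 0 = mat 1"
| "dons_P \<gamma> g th (Suc t) = \<gamma> *\<^sub>R dons_P \<gamma> g th t + outer (g (Suc t) (th (Suc t)))"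

definition dons_run :: "(real ^ 'n) set \<Rightarrow> (nat \<Rightarrow> real ^ 'n \<Rightarrow> real ^ 'n) \<Rightarrow> real \<Rightarrow> real
    \<Rightarrow> nat \<Rightarrow> (nat \<Rightarrow> real ^ 'n) \<Rightarrow> bool" where
  "dons_run S g \<eta> \<gamma> T th \<longleftrightarrow> th 1 \<in> S \<and>
     (\<forall>t\<in>{1..<T}.
        (let P = dons_P \<gamma> g th t;
             y = th t - (1 / \<eta>) *\<^sub>R (matrix_inv P *v g t (th t))
         in th (Suc t) \<in> S \<and>
            (\<forall>z\<in>S. (th (Suc t) - y) \<bullet> (P *v (th (Suc t) - y)) \<le> (z - y) \<bullet> (P *v (z - y)))))"

text \<open>Meta weights: mix_w lam N f ths t i is the weight w_{t+1}^{gamma_i}.\<close>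
fun mix_w :: "real \<Rightarrow> nat \<Rightarrow> (nat \<Rightarrow> real ^ 'n \<Rightarrow> real) \<Rightarrow> (nat \<Rightarrow> nat \<Rightarrow> real ^ 'n)
    \<Rightarrow> nat \<Rightarrow> nat \<Rightarrow> real" where
  "mix_w lam N f ths 0 i = (1 + 1 / real N) / (real i * (real i + 1))"
| "mix_w lam N f ths (Suc t) i =
     mix_w lam N f ths t i * exp (- lam * f (Suc t) (ths i (Suc t))) /
     (\<Sum>j=1..N. mix_w lam N f ths t j * exp (- lam * f (Suc t) (ths j (Suc t))))"

definition mix_play :: "real \<Rightarrow> nat \<Rightarrow> (nat \<Rightarrow> real ^ 'n \<Rightarrow> real) \<Rightarrow> (nat \<Rightarrow> nat \<Rightarrow> real ^ 'n)
    \<Rightarrow> nat \<Rightarrow> real ^ 'n" where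
  "mix_play lam N f ths t = (\<Sum>i=1..N. mix_w lam N f ths (t - 1) i *\<^sub>R ths i t)"

end

theory Submission
  imports Defs
begin

text \<open>
  A discounted Online Newton Step with discount factor 1 - e is tracked through the potential
  (eta/2) |theta(t+1) - z(t+1)|^2 in the norm of P(t), minus ln det P(t) / (2 eta):
  exp-concavity gives a quadratic lower model of each loss, the projection in the P(t)-norm does
  not increase the distance to the comparator, the matrix determinant lemma turns the gradient
  terms into increments of ln det P(t), moving the comparator costs O((1 + 1/e) |z(t+1) - z(t)|),
  and the discount costs O(e T). Hence an expert has dynamic regret O(ln(1/e) + (1 + 1/e) V + e T).
  The rates e = eta_i form a doubling grid from ln T / T up to 1/2, so one of them is within a
  factor 2 of sqrt(V/T) or is the smallest one, which makes its regret O(max (ln T) sqrt(T V)).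
  Exponential weighting with rate alpha of exp-concave losses loses only (2/alpha) ln (N + 1) = O(ln T)
  against every expert, by Jensen's inequality for the concave functions exp (- alpha f_t).
  When sqrt(T V) is at least T/2, the trivial bound 2 G D T already suffices.
\<close>

section \<open>Determinants\<close>

lemma det_axis_rows_replace:
  fixes v :: "'a::comm_ring_1^'n"
  shows "det (\<chi> i. if i = k then v else axis i 1 :: 'a^'n^'n) = v $ k"
proof -
  have v: "v = (\<Sum>j\<in>UNIV. v $ j *s axis j 1)"
    by (simp add: vec_eq_iff sum_component axis_def if_distrib cong: if_cong)
  have "det (\<chi> i. if i = k then v else axis i 1 :: 'a^'n^'n)
      = (\<Sum>j\<in>UNIV. v $ j * det (\<chi> i. if i = k then axis j 1 else axis i 1 :: 'a^'n^'n))"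
    by (subst v) (simp add: det_linear_row_sum det_row_mul)
  also have "\<dots> = (\<Sum>j\<in>UNIV. if j = k then v $ j else 0)"
  proof (rule sum.cong)
    fix j
    show "v $ j * det (\<chi> i. if i = k then axis j 1 else axis i 1 :: 'a^'n^'n) = (if j = k then v $ j else 0)"
    proof (cases "j = k")
      case True
      then have "(\<chi> i. if i = k then axis j 1 else axis i 1 :: 'a^'n^'n) = mat 1"
        by (simp add: vec_eq_iff mat_def axis_def)
      then show ?thesis using True by simp
    next
      case False
      then have "det (\<chi> i. if i = k then axis j 1 else axis i 1 :: 'a^'n^'n) = 0"
        by (intro det_identical_rows[of k j]) (auto simp: row_def vec_eq_iff)
      then show ?thesis using False by simp
    qed
  qed simp
  finally show ?thesis by simp
qed

lemma det_axis_rows_replace_add_multiples: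
  fixes u v :: "'a::comm_ring_1^'n"
  assumes "finite K" "k \<notin> K"
  shows "det (\<chi> i. if i = k then v else if i \<in> K then axis i 1 + u $ i *s v else axis i 1 :: 'a^'n^'n)
    = v $ k"
  using assms
proof (induction K rule: finite_induct)
  case empty
  then show ?case using det_axis_rows_replace[of k v] by (simp cong: if_cong)
next
  case (insert j K)
  let ?A = "\<chi> i. if i = k then v else if i \<in> K then axis i 1 + u $ i *s v else axis i 1 :: 'a^'n^'n"
  have "j \<noteq> k" using insert by auto
  then have "(\<chi> i. if i = k then v else if i \<in> insert j K then axis i 1 + u $ i *s v else axis i 1)
      = (\<chi> i. if i = j then row j ?A + u $ j *s row k ?A else row i ?A)"
    using insert(2) by (auto simp: vec_eq_iff row_def)
  then show ?case using det_row_operation[OF \<open>j \<noteq> k\<close>, of ?A] insert by simp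
qed

lemma det_axis_rows_add_rank_one:
  fixes u v :: "'a::comm_ring_1^'n"
  assumes "finite K"
  shows "det (\<chi> i. if i \<in> K then axis i 1 + u $ i *s v else axis i 1 :: 'a^'n^'n)
    = 1 + (\<Sum>i\<in>K. u $ i * v $ i)"
  using assms
proof (induction K rule: finite_induct)
  case empty
  have "(\<chi> i. axis i 1 :: 'a^'n^'n) = mat 1" by (simp add: vec_eq_iff mat_def axis_def)
  then show ?case by simp
next
  case (insert k K)
  let ?c = "\<lambda>i. if i \<in> K then axis i 1 + u $ i *s v else axis i 1 :: 'a^'n"
  have split: "(\<chi> i. if i \<in> insert k K then axis i 1 + u $ i *s v else axis i 1)
      = (\<chi> i. if i = k then axis i 1 + u $ k *s v else ?c i)"
    by (auto simp: vec_eq_iff)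
  have "(\<chi> i. if i = k then axis i 1 else ?c i) = (\<chi> i. ?c i)"
    using insert(2) by (auto simp: vec_eq_iff)
  moreover have "det (\<chi> i. if i = k then v else ?c i) = v $ k"
    by (rule det_axis_rows_replace_add_multiples[OF insert(1,2)])
  ultimately show ?case
    unfolding split det_row_add det_row_mul using insert by (simp add: algebra_simps)
qed

lemma det_mat_1_add_rank_one:
  fixes u v :: "'a::comm_ring_1^'n"
  shows "det (mat 1 + (\<chi> i j. u $ i * v $ j)) = 1 + (\<Sum>i\<in>UNIV. u $ i * v $ i)"
proof -
  have "mat 1 + (\<chi> i j. u $ i * v $ j) = (\<chi> i. if i \<in> UNIV then axis i 1 + u $ i *s v else axis i 1)"
    by (auto simp: vec_eq_iff mat_def axis_def)
  then show ?thesis using det_axis_rows_add_rank_one[of UNIV u v] by simp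
qed

lemma matrix_inv_right:
  assumes "invertible A"
  shows "A ** matrix_inv A = mat 1"
proof -
  obtain B where "A ** B = mat 1 \<and> B ** A = mat 1" using assms unfolding invertible_def by blast
  then show ?thesis unfolding matrix_inv_def by (rule someI2) blast
qed

lemma matrix_vector_mul_matrix_inv:
  fixes A :: "'a::comm_semiring_1^'n^'n"
  assumes "invertible A"
  shows "A *v (matrix_inv A *v x) = x"
  by (simp add: matrix_vector_mul_assoc matrix_inv_right[OF assms])

lemma det_scaleR:
  fixes A :: "real^'n^'n"
  shows "det (c *\<^sub>R A) = c ^ CARD('n) * det A"
proof -
  have "c *\<^sub>R A = (\<chi> i. c *s A $ i)" by (simp add: vec_eq_iff)
  then show ?thesis by (simp only: det_rows_mul[of "\<lambda>_. c" "\<lambda>i. A $ i"] prod_constant vec_lambda_eta)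
qed

lemma matrix_mul_rank_one:
  fixes A :: "'a::comm_semiring_1^'n^'m"
  shows "A ** (\<chi> i j. u $ i * v $ j) = (\<chi> i j. (A *v u) $ i * v $ j)"
  by (simp add: vec_eq_iff matrix_matrix_mult_def matrix_vector_mult_def sum_distrib_right mult.assoc)

lemma det_add_scaleR_outer:
  fixes A :: "real^'n^'n"
  assumes "invertible A"
  shows "det (A + c *\<^sub>R outer v) = det A * (1 + c * (v \<bullet> (matrix_inv A *v v)))"
proof -
  let ?w = "c *\<^sub>R (matrix_inv A *v v)"
  have "A ** (mat 1 + (\<chi> i j. ?w $ i * v $ j)) = A + (\<chi> i j. (A *v ?w) $ i * v $ j)"
    by (simp only: matrix_add_ldistrib matrix_mul_rid matrix_mul_rank_one)
  also have "\<dots> = A + c *\<^sub>R outer v"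
    by (simp add: matrix_vector_mult_scaleR matrix_vector_mul_matrix_inv[OF assms] outer_def vec_eq_iff)
  finally have "det (A + c *\<^sub>R outer v) = det A * det (mat 1 + (\<chi> i j. ?w $ i * v $ j))"
    by (metis det_mul)
  also have "det (mat 1 + (\<chi> i j. ?w $ i * v $ j)) = 1 + c * (v \<bullet> (matrix_inv A *v v))"
    unfolding det_mat_1_add_rank_one by (simp add: inner_vec_def sum_distrib_left mult_ac)
  finally show ?thesis .
qed

lemma det_le_fact_mult_power:
  fixes A :: "real^'n^'n"
  assumes "\<And>i j. \<bar>A $ i $ j\<bar> \<le> L"
  shows "det A \<le> fact CARD('n) * L ^ CARD('n)"
proof -
  have "\<bar>of_int (sign p) * (\<Prod>i\<in>UNIV. A $ i $ p i)\<bar> \<le> L ^ CARD('n)" for p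
  proof -
    have "(\<Prod>i\<in>UNIV. \<bar>A $ i $ p i\<bar>) \<le> (\<Prod>i\<in>(UNIV::'n set). L)"
      by (rule prod_mono) (use assms in auto)
    then show ?thesis by (simp add: abs_mult sign_def abs_prod)
  qed
  then have "\<bar>det A\<bar> \<le> (\<Sum>p\<in>{p. p permutes (UNIV::'n set)}. L ^ CARD('n))"
    unfolding det_def by (intro order_trans[OF sum_abs] sum_mono)
  then show ?thesis by (simp add: card_permutations)
qed

section \<open>Quadratic forms and projections\<close>

definition qform :: "real^'n^'n \<Rightarrow> real^'n \<Rightarrow> real" where
  "qform P x = x \<bullet> (P *v x)"

lemma inner_matrix_vector_sym:
  fixes P :: "real^'n^'n"
  assumes "transpose P = P"
  shows "x \<bullet> (P *v y) = y \<bullet> (P *v x)"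
  by (metis assms dot_lmul_matrix inner_commute transpose_matrix_vector)

lemma qform_outer: "qform (outer v) x = (v \<bullet> x)\<^sup>2"
  by (simp add: qform_def inner_vec_def matrix_vector_mult_def outer_def power2_eq_square
      sum_distrib_left sum_distrib_right sum_product mult_ac)

lemma qform_minus [simp]: "qform P (- x) = qform P x"
  by (simp add: qform_def vec.neg)

lemma qform_add_scaleR:
  assumes "transpose P = P"
  shows "qform P (x + s *\<^sub>R y) = qform P x + 2 * s * (x \<bullet> (P *v y)) + s\<^sup>2 * qform P y"
  using inner_matrix_vector_sym[OF assms, of y x]
  by (simp add: qform_def matrix_vector_right_distrib matrix_vector_mult_scaleR inner_add_left
      inner_add_right power2_eq_square algebra_simps)

lemma qform_diff:
  assumes "transpose P = P"
  shows "qform P x - qform P y = (x - y) \<bullet> (P *v (x + y))"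
  using inner_matrix_vector_sym[OF assms, of x y]
  by (simp add: qform_def matrix_vector_right_distrib inner_diff_left inner_add_right algebra_simps)

lemma abs_inner_matrix_vector_le:
  fixes A :: "real^'n^'n"
  assumes "\<And>i j. \<bar>A $ i $ j\<bar> \<le> L"
  shows "\<bar>x \<bullet> (A *v y)\<bar> \<le> L * CARD('n)\<^sup>2 * norm x * norm y"
proof -
  have "0 \<le> L" using order_trans[OF abs_ge_zero assms] .
  then have "\<bar>x $ i * A $ i $ j * y $ j\<bar> \<le> norm x * L * norm y" for i j
    unfolding abs_mult by (intro mult_mono component_le_norm_cart assms) auto
  then have "\<bar>\<Sum>i\<in>UNIV. \<Sum>j\<in>UNIV. x $ i * A $ i $ j * y $ j\<bar>
      \<le> (\<Sum>i\<in>(UNIV::'n set). \<Sum>j\<in>(UNIV::'n set). norm x * L * norm y)"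
    by (intro order_trans[OF sum_abs] sum_mono order_trans[OF sum_abs]) auto
  moreover have "x \<bullet> (A *v y) = (\<Sum>i\<in>UNIV. \<Sum>j\<in>UNIV. x $ i * A $ i $ j * y $ j)"
    by (simp add: inner_vec_def matrix_vector_mult_def sum_distrib_left mult_ac)
  ultimately show ?thesis by (simp add: power2_eq_square mult_ac)
qed

lemma qform_min_variational_ineq:
  assumes sym: "transpose P = P" and psd: "\<And>x. 0 \<le> qform P x"
    and "convex S" "x \<in> S" "u \<in> S"
    and min: "\<forall>z\<in>S. qform P (x - y) \<le> qform P (z - y)"
  shows "0 \<le> (x - y) \<bullet> (P *v (u - x))"
proof (rule ccontr)
  let ?c = "(x - y) \<bullet> (P *v (u - x))" and ?Q = "qform P (u - x)"
  assume "\<not> 0 \<le> ?c"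
  define s where "s = min 1 (- ?c / (?Q + 1))"
  have Q: "0 \<le> ?Q" by (rule psd)
  have "0 < - ?c / (?Q + 1)" using \<open>\<not> 0 \<le> ?c\<close> Q by (intro divide_pos_pos) auto
  then have s: "0 < s" "s \<le> 1" by (auto simp: s_def)
  have "s * ?Q \<le> - ?c / (?Q + 1) * ?Q" by (intro mult_right_mono Q) (simp add: s_def)
  also have "\<dots> < - ?c" using Q \<open>\<not> 0 \<le> ?c\<close> by (simp add: field_simps)
  finally have "2 * ?c + s * ?Q < 0" using \<open>\<not> 0 \<le> ?c\<close> by linarith
  then have neg: "s * (2 * ?c + s * ?Q) < 0" using s by (simp add: mult_pos_neg)
  have "x + s *\<^sub>R (u - x) = (1 - s) *\<^sub>R x + s *\<^sub>R u" by (simp add: algebra_simps)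
  then have "x + s *\<^sub>R (u - x) \<in> S" using convexD[OF assms(3-5), of "1 - s" s] s by simp
  moreover have "(x + s *\<^sub>R (u - x)) - y = (x - y) + s *\<^sub>R (u - x)" by (simp add: algebra_simps)
  ultimately have "qform P (x - y) \<le> qform P ((x - y) + s *\<^sub>R (u - x))"
    using min by metis
  then show False using neg unfolding qform_add_scaleR[OF sym] by (simp add: power2_eq_square algebra_simps)
qed

lemma qform_projection_le:
  assumes sym: "transpose P = P" and psd: "\<And>x. 0 \<le> qform P x"
    and "convex S" "x \<in> S" "u \<in> S"
    and "\<forall>z\<in>S. qform P (x - y) \<le> qform P (z - y)"
  shows "qform P (x - u) \<le> qform P (y - u)"
proof -
  have "qform P (y - u) = qform P (- (x - y) + (-1) *\<^sub>R (u - x))"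
    by (rule arg_cong[where f = "qform P"]) (simp add: algebra_simps)
  also have "\<dots> = qform P (x - y) + 2 * ((x - y) \<bullet> (P *v (u - x))) + qform P (u - x)"
    by (simp only: qform_add_scaleR[OF sym] qform_minus inner_minus_left) simp
  finally have "qform P (y - u) = qform P (x - y) + 2 * ((x - y) \<bullet> (P *v (u - x))) + qform P (u - x)" .
  moreover have "qform P (x - u) = qform P (u - x)" by (metis minus_diff_eq qform_minus)
  ultimately show ?thesis using qform_min_variational_ineq[OF assms] psd[of "x - y"] by simp
qed

lemma qform_newton_step:
  assumes sym: "transpose P = P" and "invertible P" "\<eta> \<noteq> 0"
  shows "qform P ((x - (1/\<eta>) *\<^sub>R (matrix_inv P *v v)) - u)
     = qform P (x - u) - (2/\<eta>) * (v \<bullet> (x - u)) + (v \<bullet> (matrix_inv P *v v)) / \<eta>\<^sup>2"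
proof -
  let ?w = "matrix_inv P *v v"
  have Pw: "P *v ?w = v" by (rule matrix_vector_mul_matrix_inv[OF assms(2)])
  have e: "(x - (1/\<eta>) *\<^sub>R ?w) - u = (x - u) + (- 1/\<eta>) *\<^sub>R ?w" by (simp add: algebra_simps)
  have "qform P ?w = v \<bullet> ?w" by (simp add: qform_def Pw inner_commute)
  then show ?thesis using assms(3) unfolding e qform_add_scaleR[OF sym]
    by (simp add: Pw inner_commute power2_eq_square field_simps)
qed

section \<open>Exp-concave losses\<close>

lemma convex_on_ge_tangent:
  fixes h :: "'a::real_normed_vector \<Rightarrow> real"
  assumes conv: "convex_on S h" and S: "convex S" and x: "x \<in> S" and y: "y \<in> S"
    and der: "(h has_derivative h') (at y within S)"
  shows "h y + h' (x - y) \<le> h x"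
proof (rule ccontr)
  let ?\<delta> = "h y + h' (x - y) - h x"
  assume "\<not> ?thesis"
  then have \<delta>: "?\<delta> > 0" by simp
  have lin: "linear h'" using has_derivative_linear[OF der] .
  then have "x \<noteq> y" using \<delta> by (auto simp: linear_0)
  then have nxy: "norm (x - y) > 0" by simp
  obtain d where d: "d > 0" and small: "\<And>z. z \<in> S \<Longrightarrow> norm (z - y) < d \<Longrightarrow>
      norm (h z - h y - h' (z - y)) \<le> ?\<delta> / (2 * norm (x - y)) * norm (z - y)"
    using der[unfolded has_derivative_within_alt] \<delta> nxy by (metis divide_pos_pos mult_pos_pos zero_less_numeral)
  define s where "s = min 1 (d / (2 * norm (x - y)))"
  have s: "0 < s" "s \<le> 1" using d nxy by (auto simp: s_def)
  define z where "z = (1 - s) *\<^sub>R y + s *\<^sub>R x"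
  have zS: "z \<in> S" unfolding z_def using convexD[OF S y x, of "1 - s" s] s by simp
  have zy: "z - y = s *\<^sub>R (x - y)" by (simp add: z_def algebra_simps)
  have "s * norm (x - y) \<le> d / (2 * norm (x - y)) * norm (x - y)"
    unfolding s_def by (intro mult_right_mono) auto
  then have "norm (z - y) < d" using zy s nxy d by simp
  then have "\<bar>h z - h y - s * h' (x - y)\<bar> \<le> ?\<delta> / (2 * norm (x - y)) * (s * norm (x - y))"
    using small[OF zS] zy s linear_scale[OF lin] by simp
  also have "\<dots> = s * ?\<delta> / 2" using nxy by (simp add: field_simps)
  finally have lower: "h y + s * h' (x - y) - s * ?\<delta> / 2 \<le> h z" by linarith
  have "h z \<le> (1 - s) * h y + s * h x"
    unfolding z_def using convex_onD[OF conv, of s y x] s x y by simp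
  with lower have "s * ?\<delta> \<le> s * ?\<delta> / 2"
    unfolding distrib_left right_diff_distrib left_diff_distrib by linarith
  then show False using s \<delta> by (simp add: mult_pos_pos)
qed

lemma ln_one_minus_le_quadratic:
  fixes z :: real
  assumes "\<bar>z\<bar> \<le> 1/2"
  shows "ln (1 - z) \<le> - z - z\<^sup>2 / 4"
proof -
  let ?\<phi> = "\<lambda>z::real. ln (1 - z) + z + z\<^sup>2 / 4"
  have der: "(?\<phi> has_real_derivative - (z / 2) * (1 + z) / (1 - z)) (at z)" if "z < 1" for z :: real
  proof -
    have "(?\<phi> has_real_derivative - 1 / (1 - z) + 1 + 2 * z / 4) (at z)"
      using that by (auto intro!: derivative_eq_intros)
    moreover have "- 1 / (1 - z) + 1 + 2 * z / 4 = - (z / 2) * (1 + z) / (1 - z)"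
      using that by (simp add: field_simps)
    ultimately show ?thesis by simp
  qed
  have "?\<phi> z \<le> ?\<phi> 0"
  proof (cases "z \<ge> 0")
    case True
    show ?thesis
    proof (rule DERIV_nonpos_imp_nonincreasing[of 0 z ?\<phi>])
      fix x assume "0 \<le> x" "x \<le> z"
      then show "\<exists>y. (?\<phi> has_real_derivative y) (at x) \<and> y \<le> 0"
        using assms by (intro exI[of _ "- (x / 2) * (1 + x) / (1 - x)"] conjI der)
          (auto intro!: divide_nonneg_pos)
    qed (use True in auto)
  next
    case False
    show ?thesis
    proof (rule DERIV_nonneg_imp_nondecreasing[of z 0 ?\<phi>])
      fix x assume x: "z \<le> x" "x \<le> 0"
      then have "0 \<le> - (x / 2) * (1 + x) / (1 - x)"
        using assms by (intro divide_nonneg_pos) (auto intro!: mult_nonpos_nonneg)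
      then show "\<exists>y. (?\<phi> has_real_derivative y) (at x) \<and> 0 \<le> y"
        using x by (intro exI[of _ "- (x / 2) * (1 + x) / (1 - x)"] conjI der) auto
    qed (use False in auto)
  qed
  then show ?thesis by simp
qed

lemma neg_ln_one_minus_le:
  fixes x :: real
  assumes "0 \<le> x" "x \<le> 1/2"
  shows "- ln (1 - x) \<le> 2 * x"
proof -
  have "x * x \<le> x * (1/2)" using assms by (intro mult_left_mono) auto
  moreover have "- x - 2 * x\<^sup>2 \<le> ln (1 - x)" using ln_one_minus_pos_lower_bound[OF assms] .
  ultimately show ?thesis unfolding power2_eq_square by linarith
qed

lemma exp_concave_scalar_bound:
  fixes \<alpha> \<eta> \<Delta> d :: real
  assumes "0 < \<eta>" "2 * \<eta> \<le> \<alpha>" "\<bar>2 * \<eta> * d\<bar> \<le> 1/2"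
    and exp_le: "exp (- \<alpha> * \<Delta>) \<le> 1 - \<alpha> * d"
  shows "d + (\<eta> / 2) * d\<^sup>2 \<le> \<Delta>"
proof -
  let ?p = "2 * \<eta> / \<alpha>"
  have "0 < \<alpha>" using assms(1,2) by simp
  have p: "0 < ?p" "?p \<le> 1" using assms(1,2) by auto
  have pos: "0 < 1 - \<alpha> * d" using exp_le exp_gt_zero[of "- \<alpha> * \<Delta>"] by linarith
  have "- \<alpha> * \<Delta> \<le> ln (1 - \<alpha> * d)"
    using exp_le pos by (metis exp_le_cancel_iff exp_ln)
  then have "?p * (- \<alpha> * \<Delta>) \<le> ?p * ln (1 - \<alpha> * d)" using p by (intro mult_left_mono) auto
  also have "\<dots> = (1 - ?p) * ln 1 + ?p * ln (1 - \<alpha> * d)" by simp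
  also have "\<dots> \<le> ln ((1 - ?p) * 1 + ?p * (1 - \<alpha> * d))"
    using concave_onD[OF ln_concave, of ?p 1 "1 - \<alpha> * d"] p pos by simp
  also have "(1 - ?p) * 1 + ?p * (1 - \<alpha> * d) = 1 - 2 * \<eta> * d" using \<open>0 < \<alpha>\<close> by (simp add: field_simps)
  also have "ln (1 - 2 * \<eta> * d) \<le> - (2 * \<eta> * d) - (2 * \<eta> * d)\<^sup>2 / 4"
    by (rule ln_one_minus_le_quadratic) (use assms(3) in simp)
  finally have "2 * \<eta> * (d + (\<eta> / 2) * d\<^sup>2) \<le> 2 * \<eta> * \<Delta>"
    using \<open>0 < \<alpha>\<close> by (simp add: power2_eq_square algebra_simps)
  then show ?thesis using assms(1) by simp
qed

locale exp_concave_game =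
  fixes S :: "'a::real_inner set" and f :: "nat \<Rightarrow> 'a \<Rightarrow> real" and g :: "nat \<Rightarrow> 'a \<Rightarrow> 'a"
    and \<alpha> \<eta> G D :: real and T :: nat
  assumes convex_S: "convex S" and norm_le_D: "\<And>x. x \<in> S \<Longrightarrow> norm x \<le> D"
    and eta_pos: "0 < \<eta>" and eta_le_alpha: "2 * \<eta> \<le> \<alpha>" and eta_le_GD: "8 * \<eta> * G * D \<le> 1"
    and exp_concave: "\<And>t. t \<in> {1..T} \<Longrightarrow> concave_on S (\<lambda>x. exp (- \<alpha> * f t x))"
    and gradient: "\<And>t x. t \<in> {1..T} \<Longrightarrow> x \<in> S \<Longrightarrow> (f t has_derivative (\<lambda>h. g t x \<bullet> h)) (at x within S)"
    and gradient_le: "\<And>t x. t \<in> {1..T} \<Longrightarrow> x \<in> S \<Longrightarrow> norm (g t x) \<le> G"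
begin

lemma norm_diff_le_diameter: "x \<in> S \<Longrightarrow> y \<in> S \<Longrightarrow> norm (x - y) \<le> 2 * D"
  using norm_triangle_ineq4[of x y] norm_le_D[of x] norm_le_D[of y] by linarith

lemma loss_ge_quadratic_model:
  assumes t: "t \<in> {1..T}" and x: "x \<in> S" and y: "y \<in> S"
  shows "f t y + g t y \<bullet> (x - y) + (\<eta> / 2) * (g t y \<bullet> (x - y))\<^sup>2 \<le> f t x"
proof -
  let ?d = "g t y \<bullet> (x - y)" and ?h = "\<lambda>x. - exp (- \<alpha> * f t x)"
  have "(?h has_derivative (\<lambda>v. - ((- \<alpha> * (g t y \<bullet> v)) * exp (- \<alpha> * f t y)))) (at y within S)"
    by (intro derivative_intros DERIV_compose_FDERIV[OF DERIV_exp] gradient[OF t y])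
  from convex_on_ge_tangent[OF exp_concave[OF t, unfolded concave_on_def] convex_S x y this]
  have "exp (- \<alpha> * f t x) \<le> exp (- \<alpha> * f t y) * (1 - \<alpha> * ?d)" by (simp add: algebra_simps)
  moreover have "exp (- \<alpha> * (f t x - f t y)) = exp (- \<alpha> * f t x) / exp (- \<alpha> * f t y)"
    by (simp add: exp_diff[symmetric] algebra_simps)
  ultimately have "exp (- \<alpha> * (f t x - f t y)) \<le> 1 - \<alpha> * ?d"
    by (simp add: divide_le_eq mult.commute)
  moreover have "\<bar>2 * \<eta> * ?d\<bar> \<le> 1/2"
  proof -
    have "\<bar>?d\<bar> \<le> norm (g t y) * norm (x - y)" by (rule Cauchy_Schwarz_ineq2)
    also have "\<dots> \<le> G * (2 * D)"
      using gradient_le[OF t y] norm_diff_le_diameter[OF x y]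
      by (intro mult_mono) (auto intro: order_trans[OF norm_ge_zero])
    finally have "\<bar>?d\<bar> \<le> G * (2 * D)" .
    then have "2 * \<eta> * \<bar>?d\<bar> \<le> 2 * \<eta> * (G * (2 * D))"
      using eta_pos by (intro mult_left_mono) auto
    then have "\<bar>2 * \<eta> * ?d\<bar> \<le> 2 * \<eta> * (G * (2 * D))"
      using eta_pos by (simp add: abs_mult)
    then show ?thesis using eta_le_GD by simp
  qed
  ultimately have "?d + (\<eta> / 2) * ?d\<^sup>2 \<le> f t x - f t y"
    by (rule exp_concave_scalar_bound[OF eta_pos eta_le_alpha, rotated])
  then show ?thesis by simp
qed

lemma loss_diff_le:
  assumes t: "t \<in> {1..T}" and x: "x \<in> S" and y: "y \<in> S"
  shows "f t x - f t y \<le> 2 * G * D"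
proof -
  have "0 \<le> (\<eta> / 2) * (g t x \<bullet> (y - x))\<^sup>2" using eta_pos by simp
  then have "f t x - f t y \<le> - (g t x \<bullet> (y - x))"
    using loss_ge_quadratic_model[OF t y x] by linarith
  also have "\<dots> \<le> norm (g t x) * norm (y - x)"
    using Cauchy_Schwarz_ineq2[of "g t x" "y - x"] by simp
  also have "\<dots> \<le> G * (2 * D)"
    using gradient_le[OF t x] norm_diff_le_diameter[OF y x]
    by (intro mult_mono) (auto intro: order_trans[OF norm_ge_zero])
  finally show ?thesis by simp
qed

lemma regret_le_trivial:
  assumes "\<And>t. t \<in> {1..T} \<Longrightarrow> x t \<in> S" "\<And>t. t \<in> {1..T} \<Longrightarrow> u t \<in> S"
  shows "(\<Sum>t=1..T. f t (x t) - f t (u t)) \<le> 2 * G * D * T"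
proof -
  have "(\<Sum>t=1..T. f t (x t) - f t (u t)) \<le> (\<Sum>t=1..T. 2 * G * D)"
    by (intro sum_mono loss_diff_le assms) auto
  then show ?thesis by (simp add: mult_ac)
qed

end

section \<open>Discounted Online Newton Step\<close>

lemma transpose_dons_P: "transpose (dons_P \<gamma> g \<theta> t) = dons_P \<gamma> g \<theta> t"
  by (induction t) (auto simp: vec_eq_iff transpose_def outer_def mat_def)

lemma qform_dons_P_Suc:
  "qform (dons_P \<gamma> g \<theta> (Suc t)) x = \<gamma> * qform (dons_P \<gamma> g \<theta> t) x + (g (Suc t) (\<theta> (Suc t)) \<bullet> x)\<^sup>2"
  by (simp add: matrix_vector_mult_add_rdistrib inner_add_right qform_outer[unfolded qform_def]
      qform_def flip: scaleR_matrix_vector_assoc)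

lemma qform_dons_P_ge:
  assumes "0 < \<gamma>"
  shows "\<gamma> ^ t * (norm x)\<^sup>2 \<le> qform (dons_P \<gamma> g \<theta> t) x"
proof (induction t)
  case 0
  then show ?case by (simp add: qform_def power2_norm_eq_inner)
next
  case (Suc t)
  then have "\<gamma> ^ Suc t * (norm x)\<^sup>2 \<le> \<gamma> * qform (dons_P \<gamma> g \<theta> t) x" using assms by simp
  then show ?case unfolding qform_dons_P_Suc by (simp add: add_increasing2)
qed

lemma qform_dons_P_nonneg: "0 < \<gamma> \<Longrightarrow> 0 \<le> qform (dons_P \<gamma> g \<theta> t) x"
  by (rule order_trans[OF _ qform_dons_P_ge]) auto

lemma det_dons_P_pos:
  assumes "0 < \<gamma>"
  shows "0 < det (dons_P \<gamma> g \<theta> t)"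
proof (induction t)
  case 0
  then show ?case by simp
next
  case (Suc t)
  let ?B = "\<gamma> *\<^sub>R dons_P \<gamma> g \<theta> t" and ?v = "g (Suc t) (\<theta> (Suc t))"
  have "0 < det ?B" using Suc assms by (simp add: det_scaleR)
  then have inv: "invertible ?B" by (simp add: invertible_det_nz)
  let ?w = "matrix_inv ?B *v ?v"
  have "?v \<bullet> ?w = (?B *v ?w) \<bullet> ?w" by (simp add: matrix_vector_mul_matrix_inv[OF inv])
  also have "\<dots> = \<gamma> * qform (dons_P \<gamma> g \<theta> t) ?w"
    by (simp add: qform_def inner_commute flip: scaleR_matrix_vector_assoc)
  finally have "0 \<le> ?v \<bullet> ?w"
    using qform_dons_P_nonneg[OF assms] assms by (simp add: zero_le_mult_iff)
  moreover have "det (dons_P \<gamma> g \<theta> (Suc t)) = det ?B * (1 + 1 * (?v \<bullet> ?w))"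
    using det_add_scaleR_outer[OF inv, of 1 ?v] by simp
  ultimately show ?case using \<open>0 < det ?B\<close> by simp
qed

lemma invertible_dons_P:
  assumes "0 < \<gamma>"
  shows "invertible (dons_P \<gamma> g \<theta> t)"
  using det_dons_P_pos[OF assms, of g \<theta> t] by (simp add: invertible_det_nz)

text \<open>By the matrix determinant lemma the left-hand side equals
  1 - gamma^n det P(t) / det P(t+1), so ln x \<le> x - 1 bounds it by the growth of ln det.\<close>
lemma inner_matrix_inv_dons_P_le:
  fixes g :: "nat \<Rightarrow> real^'n \<Rightarrow> real^'n"
  assumes "0 < \<gamma>"
  shows "g (Suc t) (\<theta> (Suc t)) \<bullet> (matrix_inv (dons_P \<gamma> g \<theta> (Suc t)) *v g (Suc t) (\<theta> (Suc t)))
     \<le> ln (det (dons_P \<gamma> g \<theta> (Suc t))) - ln (det (dons_P \<gamma> g \<theta> t)) - CARD('n) * ln \<gamma>"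
proof -
  let ?A = "dons_P \<gamma> g \<theta> (Suc t)" and ?B = "dons_P \<gamma> g \<theta> t" and ?v = "g (Suc t) (\<theta> (Suc t))"
  let ?r = "?v \<bullet> (matrix_inv ?A *v ?v)"
  have dA: "0 < det ?A" and dA0: "0 < det ?B" by (rule det_dons_P_pos[OF assms])+
  have "?A + (-1) *\<^sub>R outer ?v = \<gamma> *\<^sub>R ?B" by simp
  then have "\<gamma> ^ CARD('n) * det ?B = det ?A * (1 - ?r)"
    using det_add_scaleR_outer[OF invertible_dons_P[OF assms, of g \<theta> "Suc t"], of "-1" ?v] by (simp add: det_scaleR)
  then have ratio: "1 - ?r = \<gamma> ^ CARD('n) * det ?B / det ?A" using dA by (simp add: field_simps)
  have "ln (\<gamma> ^ CARD('n) * det ?B / det ?A) \<le> (1 - ?r) - 1"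
    unfolding ratio[symmetric] by (rule ln_le_minus_one) (use ratio dA dA0 assms in simp)
  moreover have "ln (\<gamma> ^ CARD('n) * det ?B / det ?A) = CARD('n) * ln \<gamma> + ln (det ?B) - ln (det ?A)"
    using dA dA0 assms by (simp add: ln_div ln_mult ln_realpow)
  ultimately show ?thesis by simp
qed

lemma abs_dons_P_entry_le:
  assumes "0 < \<gamma>" "\<gamma> < 1" "\<And>s. s \<in> {1..t} \<Longrightarrow> norm (g s (\<theta> s)) \<le> G"
  shows "\<bar>dons_P \<gamma> g \<theta> t $ i $ j\<bar> \<le> 1 + G\<^sup>2 / (1 - \<gamma>)"
  using assms(3)
proof (induction t)
  case 0
  then show ?case using assms(2) by (simp add: mat_def)
next
  case (Suc t)
  let ?v = "g (Suc t) (\<theta> (Suc t))"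
  have "\<bar>?v $ i * ?v $ j\<bar> \<le> norm ?v * norm ?v"
    unfolding abs_mult by (intro mult_mono component_le_norm_cart) auto
  also have "\<dots> \<le> G\<^sup>2" using Suc.prems[of "Suc t"] by (simp add: power2_eq_square mult_mono')
  finally have "\<bar>dons_P \<gamma> g \<theta> (Suc t) $ i $ j\<bar> \<le> \<gamma> * \<bar>dons_P \<gamma> g \<theta> t $ i $ j\<bar> + G\<^sup>2"
    using assms(1) by (simp add: outer_def abs_mult abs_triangle_ineq[THEN order_trans])
  also have "\<dots> \<le> \<gamma> * (1 + G\<^sup>2 / (1 - \<gamma>)) + G\<^sup>2"
    using Suc assms(1) by (intro add_mono mult_left_mono) auto
  also have "\<dots> = \<gamma> + G\<^sup>2 / (1 - \<gamma>)" using assms(2) by (simp add: field_simps)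
  also have "\<dots> \<le> 1 + G\<^sup>2 / (1 - \<gamma>)" using assms(2) by simp
  finally show ?case .
qed

lemma sum_le_telescoping:
  fixes a b c :: "nat \<Rightarrow> real"
  assumes "\<And>t. t \<in> {1..m} \<Longrightarrow> a t \<le> b (t - 1) - b t + c t"
  shows "(\<Sum>t=1..m. a t) \<le> b 0 - b m + (\<Sum>t=1..m. c t)"
  using assms
proof (induction m)
  case (Suc m)
  then show ?case using Suc.prems[of "Suc m"] by (simp add: sum.cl_ivl_Suc)
qed simp

lemma dons_run_in_S:
  assumes "dons_run S g \<eta> \<gamma> T \<theta>"
  shows "t \<in> {1..T} \<Longrightarrow> \<theta> t \<in> S"
proof (induction t)
  case (Suc t)
  show ?case
  proof (cases "t = 0")
    case True
    then show ?thesis using assms by (simp add: dons_run_def)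
  next
    case False
    then have "t \<in> {1..<T}" using Suc by auto
    then show ?thesis using assms unfolding dons_run_def Let_def by blast
  qed
qed simp

locale dons_expert = exp_concave_game S f g \<alpha> \<eta> G D T
  for S :: "(real^'n) set" and f g \<alpha> \<eta> G D T +
  fixes \<gamma> :: real and \<theta> :: "nat \<Rightarrow> real^'n"
  assumes gamma_pos: "0 < \<gamma>" and gamma_lt_1: "\<gamma> < 1" and run: "dons_run S g \<eta> \<gamma> T \<theta>"
begin

abbreviation P :: "nat \<Rightarrow> real^'n^'n" where
  "P \<equiv> dons_P \<gamma> g \<theta>"

lemma iterate_in_S: "t \<in> {1..T} \<Longrightarrow> \<theta> t \<in> S"
  by (rule dons_run_in_S[OF run])

lemma ons_step:
  assumes t: "t \<in> {1..<T}" and u: "u \<in> S"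
  shows "f t (\<theta> t) - f t u \<le> (\<eta> / 2) * (qform (P (t - 1)) (\<theta> t - u) - qform (P t) (\<theta> (Suc t) - u))
     + (g t (\<theta> t) \<bullet> (matrix_inv (P t) *v g t (\<theta> t))) / (2 * \<eta>)"
proof -
  let ?v = "g t (\<theta> t)"
  let ?d = "?v \<bullet> (\<theta> t - u)"
  let ?y = "\<theta> t - (1 / \<eta>) *\<^sub>R (matrix_inv (P t) *v ?v)"
  have tT: "t \<in> {1..T}" and \<theta>t: "\<theta> t \<in> S" using t iterate_in_S[of t] by auto
  have "f t (\<theta> t) + ?v \<bullet> (u - \<theta> t) + (\<eta> / 2) * (?v \<bullet> (u - \<theta> t))\<^sup>2 \<le> f t u"
    by (rule loss_ge_quadratic_model[OF tT u \<theta>t])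
  moreover have "?v \<bullet> (u - \<theta> t) = - ?d" by (simp add: inner_diff_right)
  ultimately have curv: "f t (\<theta> t) - f t u \<le> ?d - (\<eta> / 2) * ?d\<^sup>2" by simp
  have proj: "\<theta> (Suc t) \<in> S \<and> (\<forall>z\<in>S. qform (P t) (\<theta> (Suc t) - ?y) \<le> qform (P t) (z - ?y))"
    using run t unfolding dons_run_def Let_def qform_def by blast
  have "qform (P t) (\<theta> (Suc t) - u) \<le> qform (P t) (?y - u)"
    using proj by (intro qform_projection_le[OF transpose_dons_P qform_dons_P_nonneg[OF gamma_pos] convex_S]) (auto simp: u)
  also have "\<dots> = qform (P t) (\<theta> t - u) - (2 / \<eta>) * ?d + (?v \<bullet> (matrix_inv (P t) *v ?v)) / \<eta>\<^sup>2"
    using eta_pos by (intro qform_newton_step[OF transpose_dons_P invertible_dons_P[OF gamma_pos]]) simp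
  finally have descent: "?d \<le> (\<eta> / 2) * (qform (P t) (\<theta> t - u) - qform (P t) (\<theta> (Suc t) - u))
      + (?v \<bullet> (matrix_inv (P t) *v ?v)) / (2 * \<eta>)"
    using eta_pos by (simp add: field_simps power2_eq_square)
  have "qform (P t) (\<theta> t - u) \<le> qform (P (t - 1)) (\<theta> t - u) + ?d\<^sup>2"
  proof -
    have "t = Suc (t - 1)" using t by auto
    then have "qform (P t) (\<theta> t - u) = \<gamma> * qform (P (t - 1)) (\<theta> t - u) + ?d\<^sup>2"
      by (metis qform_dons_P_Suc)
    moreover have "\<gamma> * qform (P (t - 1)) (\<theta> t - u) \<le> qform (P (t - 1)) (\<theta> t - u)"
      using qform_dons_P_nonneg[OF gamma_pos] gamma_pos gamma_lt_1 by (intro mult_left_le_one_le) auto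
    ultimately show ?thesis by simp
  qed
  then have "(\<eta> / 2) * qform (P t) (\<theta> t - u) \<le> (\<eta> / 2) * (qform (P (t - 1)) (\<theta> t - u) + ?d\<^sup>2)"
    using eta_pos by (intro mult_left_mono) auto
  then show ?thesis using curv descent unfolding right_diff_distrib distrib_left by linarith
qed

lemma dons_P_entry_le:
  assumes "t \<le> T"
  shows "\<bar>P t $ i $ j\<bar> \<le> 1 + G\<^sup>2 / (1 - \<gamma>)"
proof (rule abs_dons_P_entry_le[OF gamma_pos gamma_lt_1])
  fix s assume "s \<in> {1..t}"
  then have "s \<in> {1..T}" using assms by auto
  then show "norm (g s (\<theta> s)) \<le> G" by (intro gradient_le iterate_in_S)
qed

lemma qform_P_shift_le:
  assumes "m \<le> T" "a \<in> S" "b \<in> S" "c \<in> S"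
  shows "qform (P m) (a - b) \<le> qform (P m) (a - c) + 4 * D * (1 + G\<^sup>2 / (1 - \<gamma>)) * CARD('n)\<^sup>2 * norm (c - b)"
proof -
  let ?L = "1 + G\<^sup>2 / (1 - \<gamma>)"
  have "qform (P m) (a - b) - qform (P m) (a - c) = ((a - b) - (a - c)) \<bullet> (P m *v ((a - b) + (a - c)))"
    by (rule qform_diff[OF transpose_dons_P])
  also have "\<dots> \<le> ?L * CARD('n)\<^sup>2 * norm ((a - b) - (a - c)) * norm ((a - b) + (a - c))"
    using abs_inner_matrix_vector_le[OF dons_P_entry_le[OF assms(1)]] by (rule abs_le_D1)
  also have "\<dots> \<le> ?L * CARD('n)\<^sup>2 * norm ((a - b) - (a - c)) * (4 * D)"
  proof (rule mult_left_mono)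
    have "norm (a - b) \<le> 2 * D" "norm (a - c) \<le> 2 * D"
      using norm_diff_le_diameter assms by auto
    then show "norm ((a - b) + (a - c)) \<le> 4 * D"
      using norm_triangle_ineq[of "a - b" "a - c"] by linarith
    show "0 \<le> ?L * CARD('n)\<^sup>2 * norm ((a - b) - (a - c))" using gamma_lt_1 by simp
  qed
  finally show ?thesis by (simp add: algebra_simps)
qed

definition potential :: "(nat \<Rightarrow> real^'n) \<Rightarrow> nat \<Rightarrow> real" where
  "potential u t = (\<eta> / 2) * qform (P t) (\<theta> (Suc t) - u (Suc t)) - ln (det (P t)) / (2 * \<eta>)"

lemma dons_regret_step:
  assumes t: "t \<in> {1..<T}" and u: "u t \<in> S" "u (Suc t) \<in> S"
  shows "f t (\<theta> t) - f t (u t) \<le> potential u (t - 1) - potential u t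
     + 2 * \<eta> * D * (1 + G\<^sup>2 / (1 - \<gamma>)) * CARD('n)\<^sup>2 * norm (u (Suc t) - u t)
     - CARD('n) * ln \<gamma> / (2 * \<eta>)"
proof -
  let ?K = "4 * D * (1 + G\<^sup>2 / (1 - \<gamma>)) * CARD('n)\<^sup>2" and ?v = "g t (\<theta> t)"
  have t1: "Suc (t - 1) = t" using t by auto
  have "\<theta> (Suc t) \<in> S" using t by (intro iterate_in_S) auto
  then have "qform (P t) (\<theta> (Suc t) - u (Suc t)) \<le> qform (P t) (\<theta> (Suc t) - u t) + ?K * norm (u t - u (Suc t))"
    using t u by (intro qform_P_shift_le) auto
  then have "(\<eta> / 2) * qform (P t) (\<theta> (Suc t) - u (Suc t))
      \<le> (\<eta> / 2) * (qform (P t) (\<theta> (Suc t) - u t) + ?K * norm (u (Suc t) - u t))"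
    using eta_pos by (intro mult_left_mono) (auto simp: norm_minus_commute)
  also have "\<dots> = (\<eta> / 2) * qform (P t) (\<theta> (Suc t) - u t)
      + 2 * \<eta> * D * (1 + G\<^sup>2 / (1 - \<gamma>)) * CARD('n)\<^sup>2 * norm (u (Suc t) - u t)"
    by (simp add: algebra_simps)
  finally have shift: "(\<eta> / 2) * qform (P t) (\<theta> (Suc t) - u (Suc t))
      \<le> (\<eta> / 2) * qform (P t) (\<theta> (Suc t) - u t)
      + 2 * \<eta> * D * (1 + G\<^sup>2 / (1 - \<gamma>)) * CARD('n)\<^sup>2 * norm (u (Suc t) - u t)" .
  have "?v \<bullet> (matrix_inv (P t) *v ?v) \<le> ln (det (P t)) - ln (det (P (t - 1))) - CARD('n) * ln \<gamma>"
    using inner_matrix_inv_dons_P_le[OF gamma_pos, where t = "t - 1" and g = g and \<theta> = \<theta>]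
    unfolding t1 .
  then have logdet: "(?v \<bullet> (matrix_inv (P t) *v ?v)) / (2 * \<eta>)
      \<le> ln (det (P t)) / (2 * \<eta>) - ln (det (P (t - 1))) / (2 * \<eta>) - CARD('n) * ln \<gamma> / (2 * \<eta>)"
    using eta_pos by (simp add: divide_right_mono flip: diff_divide_distrib)
  show ?thesis
    using ons_step[OF t u(1)] shift logdet unfolding potential_def t1 right_diff_distrib by linarith
qed

lemma potential_0_le:
  assumes "u 1 \<in> S"
  shows "potential u 0 \<le> 2 * \<eta> * D\<^sup>2"
proof -
  have "\<theta> 1 \<in> S" using run by (simp add: dons_run_def)
  then have "norm (\<theta> 1 - u 1) \<le> 2 * D" using assms by (rule norm_diff_le_diameter)
  then have "(norm (\<theta> 1 - u 1))\<^sup>2 \<le> (2 * D)\<^sup>2" by (intro power_mono) auto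
  then show ?thesis
    using eta_pos by (simp add: potential_def qform_def power2_norm_eq_inner power_mult_distrib mult_left_mono)
qed

lemma neg_potential_le:
  assumes "m \<le> T"
  shows "- potential u m \<le> (ln (fact CARD('n)) + CARD('n) * ln (1 + G\<^sup>2 / (1 - \<gamma>))) / (2 * \<eta>)"
proof -
  let ?L = "1 + G\<^sup>2 / (1 - \<gamma>)"
  have "det (P m) \<le> fact CARD('n) * ?L ^ CARD('n)"
    by (rule det_le_fact_mult_power) (rule dons_P_entry_le[OF assms])
  then have "ln (det (P m)) \<le> ln (fact CARD('n) * ?L ^ CARD('n))"
    using det_dons_P_pos[OF gamma_pos, of g \<theta> m] by (subst ln_le_cancel_iff) auto
  also have "\<dots> = ln (fact CARD('n)) + CARD('n) * ln ?L"
  proof -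
    have "0 < ?L" using gamma_lt_1 by (simp add: add_pos_nonneg)
    then show ?thesis by (simp add: ln_mult ln_realpow)
  qed
  finally have "ln (det (P m)) \<le> ln (fact CARD('n)) + CARD('n) * ln ?L" .
  moreover have "0 \<le> (\<eta> / 2) * qform (P m) (\<theta> (Suc m) - u (Suc m))"
    using eta_pos by (intro mult_nonneg_nonneg qform_dons_P_nonneg[OF gamma_pos]) auto
  moreover have "ln (det (P m)) / (2 * \<eta>) \<le> (ln (fact CARD('n)) + CARD('n) * ln ?L) / (2 * \<eta>)"
    using calculation(1) eta_pos by (intro divide_right_mono) auto
  ultimately show ?thesis unfolding potential_def by linarith
qed

lemma dons_regret:
  assumes "1 \<le> T" and u: "\<And>t. t \<in> {1..T} \<Longrightarrow> u t \<in> S"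
  shows "(\<Sum>t=1..T. f t (\<theta> t) - f t (u t)) \<le> 2 * G * D + 2 * \<eta> * D\<^sup>2
     + 2 * \<eta> * D * (1 + G\<^sup>2 / (1 - \<gamma>)) * CARD('n)\<^sup>2 * (\<Sum>t=2..T. norm (u t - u (t - 1)))
     + (ln (fact CARD('n)) + CARD('n) * ln (1 + G\<^sup>2 / (1 - \<gamma>)) - T * CARD('n) * ln \<gamma>) / (2 * \<eta>)"
proof -
  obtain m where m: "T = Suc m" using assms(1) by (cases T) auto
  let ?K = "2 * \<eta> * D * (1 + G\<^sup>2 / (1 - \<gamma>)) * CARD('n)\<^sup>2"
  let ?c = "\<lambda>t. ?K * norm (u (Suc t) - u t) - CARD('n) * ln \<gamma> / (2 * \<eta>)"
  have path: "(\<Sum>t=2..T. norm (u t - u (t - 1))) = (\<Sum>t=1..m. norm (u (Suc t) - u t))"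
    unfolding m using sum.shift_bounds_cl_Suc_ivl[of "\<lambda>t. norm (u t - u (t - 1))" 1 m]
    by (simp add: numeral_2_eq_2)
  have "- (m * CARD('n) * ln \<gamma>) \<le> - (T * CARD('n) * ln \<gamma>)"
    using gamma_pos gamma_lt_1 by (simp add: m mult_nonpos_nonneg)
  then have "- (m * CARD('n) * ln \<gamma>) / (2 * \<eta>) \<le> - (T * CARD('n) * ln \<gamma>) / (2 * \<eta>)"
    using eta_pos by (intro divide_right_mono) auto
  moreover have "(\<Sum>t=1..m. ?c t) = ?K * (\<Sum>t=2..T. norm (u t - u (t - 1))) - m * CARD('n) * ln \<gamma> / (2 * \<eta>)"
    unfolding path by (simp add: sum_subtractf sum_distrib_left mult.assoc)
  ultimately have drift: "(\<Sum>t=1..m. ?c t) \<le> ?K * (\<Sum>t=2..T. norm (u t - u (t - 1))) - T * CARD('n) * ln \<gamma> / (2 * \<eta>)"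
    by simp
  have "(\<Sum>t=1..m. f t (\<theta> t) - f t (u t)) \<le> potential u 0 - potential u m + (\<Sum>t=1..m. ?c t)"
  proof (rule sum_le_telescoping)
    fix t assume "t \<in> {1..m}"
    then show "f t (\<theta> t) - f t (u t) \<le> potential u (t - 1) - potential u t + ?c t"
      using dons_regret_step[of t u] u[of t] u[of "Suc t"] m by fastforce
  qed
  moreover have "potential u 0 \<le> 2 * \<eta> * D\<^sup>2" using u assms(1) by (intro potential_0_le) auto
  moreover have "- potential u m \<le> (ln (fact CARD('n)) + CARD('n) * ln (1 + G\<^sup>2 / (1 - \<gamma>))) / (2 * \<eta>)"
    using m by (intro neg_potential_le) auto
  \<comment> \<open>The run defines \<open>\<theta>\<close> only up to T, so the last round is not telescoped.\<close>
  moreover have "f T (\<theta> T) - f T (u T) \<le> 2 * G * D"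
    using assms iterate_in_S by (intro loss_diff_le) auto
  ultimately show ?thesis
    using drift by (simp add: m sum.cl_ivl_Suc add_divide_distrib diff_divide_distrib)
qed

end

section \<open>Exponentially weighted mixture of the experts\<close>

lemma sum_inverse_mult_Suc: "(\<Sum>j=1..N. 1 / (real j * (real j + 1))) = real N / (real N + 1)"
proof (induction N)
  case (Suc N)
  have "real N + 1 \<noteq> 0" "real N + 2 \<noteq> 0" by linarith+
  then have "real N / (real N + 1) + 1 / ((real N + 1) * (real N + 2)) = (real N + 1) / (real N + 2)"
    by (simp add: divide_simps) (simp add: algebra_simps power2_eq_square)
  then show ?case using Suc by (simp add: sum.cl_ivl_Suc add.commute)
qed simp

definition mix_prior :: "nat \<Rightarrow> nat \<Rightarrow> real" where
  "mix_prior N i = (1 + 1 / real N) / (real i * (real i + 1))"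

lemma mix_prior_pos: "1 \<le> i \<Longrightarrow> 0 < mix_prior N i"
  by (simp add: mix_prior_def add_pos_nonneg)

lemma sum_mix_prior:
  assumes "1 \<le> N"
  shows "(\<Sum>j=1..N. mix_prior N j) = 1"
proof -
  have "(\<Sum>j=1..N. mix_prior N j) = (1 + 1 / real N) * (\<Sum>j=1..N. 1 / (real j * (real j + 1)))"
    by (simp add: mix_prior_def sum_distrib_left)
  also have "\<dots> = 1"
  proof -
    have "0 < real N + real N * real N" using assms by (simp add: add_pos_nonneg)
    then show ?thesis using assms by (simp only: sum_inverse_mult_Suc) (simp add: field_simps)
  qed
  finally show ?thesis .
qed

definition mix_potential :: "real \<Rightarrow> nat \<Rightarrow> (nat \<Rightarrow> 'a \<Rightarrow> real) \<Rightarrow> (nat \<Rightarrow> nat \<Rightarrow> 'a) \<Rightarrow> nat \<Rightarrow> real" where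
  "mix_potential lam N f ths t = (\<Sum>j=1..N. mix_prior N j * exp (- lam * (\<Sum>s=1..t. f s (ths j s))))"

lemma mix_potential_pos: "1 \<le> N \<Longrightarrow> 0 < mix_potential lam N f ths t"
  unfolding mix_potential_def by (intro sum_pos) (auto intro!: mult_pos_pos mix_prior_pos)

lemma mix_potential_0: "1 \<le> N \<Longrightarrow> mix_potential lam N f ths 0 = 1"
  using sum_mix_prior[of N] by (simp add: mix_potential_def)

lemma exp_cum_loss_Suc:
  fixes lam :: real
  shows "exp (- lam * (\<Sum>s=1..Suc t. f s (ths j s))) = exp (- lam * (\<Sum>s=1..t. f s (ths j s))) * exp (- lam * f (Suc t) (ths j (Suc t)))"
proof -
  have "(\<Sum>s=1..Suc t. f s (ths j s)) = (\<Sum>s=1..t. f s (ths j s)) + f (Suc t) (ths j (Suc t))" by simp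
  then show ?thesis by (simp only: distrib_left mult_exp_exp)
qed

lemma mix_w_eq:
  assumes N: "1 \<le> N"
  shows "mix_w lam N f ths t i = mix_prior N i * exp (- lam * (\<Sum>s=1..t. f s (ths i s))) / mix_potential lam N f ths t"
proof (induction t arbitrary: i)
  case 0
  then show ?case by (simp add: mix_potential_0[OF N] mix_prior_def)
next
  case (Suc t)
  let ?e = "\<lambda>j. exp (- lam * f (Suc t) (ths j (Suc t)))" and ?W = "mix_potential lam N f ths t"
  have W: "0 < ?W" by (rule mix_potential_pos[OF N])
  have "(\<Sum>j=1..N. mix_w lam N f ths t j * ?e j) = mix_potential lam N f ths (Suc t) / ?W"
    unfolding Suc mix_potential_def exp_cum_loss_Suc by (simp add: sum_divide_distrib sum_distrib_right mult_ac)
  then have "mix_w lam N f ths (Suc t) i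
      = (mix_prior N i * exp (- lam * (\<Sum>s=1..t. f s (ths i s))) / ?W) * ?e i / (mix_potential lam N f ths (Suc t) / ?W)"
    by (simp only: mix_w.simps Suc)
  also have "\<dots> = mix_prior N i * exp (- lam * (\<Sum>s=1..Suc t. f s (ths i s))) / mix_potential lam N f ths (Suc t)"
    using W unfolding exp_cum_loss_Suc by (simp add: field_simps)
  finally show ?case .
qed

lemma mix_w_nonneg: "1 \<le> N \<Longrightarrow> 1 \<le> i \<Longrightarrow> 0 \<le> mix_w lam N f ths t i"
  using mix_potential_pos[of N lam f ths t] mix_prior_pos[of i N] by (simp add: mix_w_eq)

lemma sum_mix_w: "1 \<le> N \<Longrightarrow> (\<Sum>i=1..N. mix_w lam N f ths t i) = 1"
  using mix_potential_pos[of N lam f ths t]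
  by (simp add: mix_w_eq mix_potential_def flip: sum_divide_distrib)

lemma mix_play_in:
  assumes "1 \<le> N" "convex S" "\<And>i. i \<in> {1..N} \<Longrightarrow> ths i t \<in> S"
  shows "mix_play lam N f ths t \<in> S"
  unfolding mix_play_def
  using assms sum_mix_w[OF assms(1)] mix_w_nonneg[OF assms(1)] by (intro convex_sum) auto

text \<open>Exp-concavity turns the weighted average of the experts into a lower bound on the
  exponentiated loss of the mixture (Jensen), and these bounds telescope to the potential.\<close>
lemma exp_cum_loss_mix_play_ge:
  assumes N: "1 \<le> N" and S: "convex S"
    and conc: "\<And>t. t \<in> {1..T} \<Longrightarrow> concave_on S (\<lambda>x. exp (- \<alpha> * f t x))"
    and ths: "\<And>i t. i \<in> {1..N} \<Longrightarrow> t \<in> {1..T} \<Longrightarrow> ths i t \<in> S"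
  shows "m \<le> T \<Longrightarrow> mix_potential \<alpha> N f ths m \<le> exp (- \<alpha> * (\<Sum>t=1..m. f t (mix_play \<alpha> N f ths t)))"
proof (induction m)
  case 0
  then show ?case by (simp add: mix_potential_0[OF N])
next
  case (Suc m)
  let ?W = "mix_potential \<alpha> N f ths" and ?e = "\<lambda>j. exp (- \<alpha> * f (Suc m) (ths j (Suc m)))"
  have t: "Suc m \<in> {1..T}" using Suc by auto
  have "(\<Sum>i=1..N. mix_w \<alpha> N f ths m i * (- ?e i))
      \<ge> - exp (- \<alpha> * f (Suc m) (\<Sum>i=1..N. mix_w \<alpha> N f ths m i *\<^sub>R ths i (Suc m)))"
    using N conc[OF t] ths t sum_mix_w[OF N] mix_w_nonneg[OF N]
    by (intro convex_on_sum[where f = "\<lambda>x. - exp (- \<alpha> * f (Suc m) x)"]) (auto simp: concave_on_def)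
  moreover have "(\<Sum>i=1..N. mix_w \<alpha> N f ths m i * ?e i) = ?W (Suc m) / ?W m"
    unfolding mix_w_eq[OF N] mix_potential_def exp_cum_loss_Suc
    by (simp add: sum_divide_distrib sum_distrib_right mult_ac)
  ultimately have step: "?W (Suc m) / ?W m \<le> exp (- \<alpha> * f (Suc m) (mix_play \<alpha> N f ths (Suc m)))"
    by (simp add: mix_play_def sum_negf)
  have "?W (Suc m) = ?W m * (?W (Suc m) / ?W m)" using mix_potential_pos[OF N, of \<alpha> f ths m] by simp
  also have "\<dots> \<le> exp (- \<alpha> * (\<Sum>t=1..m. f t (mix_play \<alpha> N f ths t))) * exp (- \<alpha> * f (Suc m) (mix_play \<alpha> N f ths (Suc m)))"
    using Suc step mix_potential_pos[OF N, of \<alpha> f ths] by (intro mult_mono) (auto intro: less_imp_le)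
  finally show ?case by (simp add: sum.cl_ivl_Suc algebra_simps flip: exp_add)
qed

lemma mix_play_regret:
  assumes N: "1 \<le> N" and alpha: "0 < \<alpha>" and S: "convex S"
    and conc: "\<And>t. t \<in> {1..T} \<Longrightarrow> concave_on S (\<lambda>x. exp (- \<alpha> * f t x))"
    and ths: "\<And>i t. i \<in> {1..N} \<Longrightarrow> t \<in> {1..T} \<Longrightarrow> ths i t \<in> S"
    and i: "i \<in> {1..N}"
  shows "(\<Sum>t=1..T. f t (mix_play \<alpha> N f ths t)) \<le> (\<Sum>t=1..T. f t (ths i t)) + 2 * ln (real N + 1) / \<alpha>"
proof -
  let ?X = "\<Sum>t=1..T. f t (mix_play \<alpha> N f ths t)" and ?L = "\<Sum>t=1..T. f t (ths i t)"
  have p: "0 < mix_prior N i" using i by (simp add: mix_prior_pos)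
  have "mix_prior N i * exp (- \<alpha> * ?L) \<le> mix_potential \<alpha> N f ths T"
    unfolding mix_potential_def using i mix_prior_pos
    by (intro member_le_sum) (auto intro!: mult_nonneg_nonneg less_imp_le)
  also have "\<dots> \<le> exp (- \<alpha> * ?X)" by (rule exp_cum_loss_mix_play_ge[OF N S conc ths order_refl])
  finally have "ln (mix_prior N i * exp (- \<alpha> * ?L)) \<le> ln (exp (- \<alpha> * ?X))"
    using p by (subst ln_le_cancel_iff) auto
  then have "ln (mix_prior N i) - \<alpha> * ?L \<le> - \<alpha> * ?X" using p by (simp add: ln_mult)
  then have X: "?X \<le> ?L - ln (mix_prior N i) / \<alpha>" using alpha by (simp add: field_simps)
  have "0 < 1 + 1 / real N" by (simp add: add_pos_nonneg)
  moreover have "0 < real i * (real i + 1)" using i by simp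
  ultimately have "- ln (mix_prior N i) = ln (real i * (real i + 1)) - ln (1 + 1 / real N)"
    using i by (simp add: mix_prior_def ln_div)
  also have "\<dots> \<le> ln (real i * (real i + 1))" using N by simp
  also have "\<dots> \<le> ln ((real N + 1) * (real N + 1))"
    using i by (intro ln_mono mult_mono) auto
  also have "\<dots> = 2 * ln (real N + 1)" by (simp add: ln_mult)
  finally have "- ln (mix_prior N i) / \<alpha> \<le> 2 * ln (real N + 1) / \<alpha>"
    using alpha by (intro divide_right_mono) auto
  then show ?thesis using X by simp
qed

section \<open>The grid of discount factors\<close>

lemma dons_eta_Suc: "1 \<le> i \<Longrightarrow> dons_eta T D (Suc i) = 2 * dons_eta T D i"
  by (cases i) (simp_all add: dons_eta_def)

lemma dons_eta_pos: "2 \<le> T \<Longrightarrow> 0 < D \<Longrightarrow> 0 < dons_eta T D i"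
  by (simp add: dons_eta_def)

lemma dons_eta_1_le:
  assumes "2 \<le> T" "0 < D"
  shows "dons_eta T D 1 \<le> dons_eta T D i"
proof -
  have "0 \<le> (1/2) * (ln (real T) / (real T * sqrt (2 * D)))" using assms by simp
  then have "(1/2) * (ln (real T) / (real T * sqrt (2 * D))) * 1
      \<le> (1/2) * (ln (real T) / (real T * sqrt (2 * D))) * 2 ^ (i - 1)"
    by (intro mult_left_mono) auto
  then show ?thesis by (simp add: dons_eta_def)
qed

lemma mult_dons_eta_1_le:
  assumes "2 \<le> T" "1 \<le> D"
  shows "real T * dons_eta T D 1 \<le> ln (real T)"
proof -
  have "1 \<le> sqrt (2 * D)" by (rule real_le_rsqrt) (use assms(2) in simp)
  then have "1 \<le> 2 * sqrt (2 * D)" by linarith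
  then have "ln (real T) / (2 * sqrt (2 * D)) \<le> ln (real T)"
    using assms by (simp add: divide_le_eq mult_le_cancel_left1)
  then show ?thesis using assms(1) by (simp add: dons_eta_def)
qed

lemma dons_eta_1_lt:
  assumes "2 \<le> T" "1 \<le> D"
  shows "dons_eta T D 1 < 1/2"
proof -
  have "ln (real T) < real T" using assms(1) by (intro ln_less_self) auto
  also have "\<dots> \<le> real T * sqrt (2 * D)" using assms by simp
  finally have "ln (real T) / (real T * sqrt (2 * D)) < 1"
    using assms by (simp add: divide_less_eq)
  then show ?thesis by (simp add: dons_eta_def)
qed

lemma dons_eta_N_ge:
  assumes T: "2 \<le> T" and D: "1 \<le> D"
  shows "1/2 \<le> dons_eta T D (dons_N T D)"
proof -
  let ?e = "dons_eta T D 1" and ?X = "2 * D * (real T)\<^sup>2 / (ln (real T))\<^sup>2"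
  define k where "k = nat \<lceil>(1/2) * log 2 ?X\<rceil>"
  have e: "0 < ?e" using dons_eta_pos[OF T] D by simp
  have X: "?X = (1 / (2 * ?e))\<^sup>2"
    using T D by (simp add: dons_eta_def power_divide power_mult_distrib field_simps)
  have "log 2 ?X \<le> real (2 * k)" unfolding k_def by linarith
  then have "2 powr (log 2 ?X) \<le> 2 powr real (2 * k)" by (intro powr_mono) auto
  moreover have "(2::real) powr real (2 * k) = 2 ^ (2 * k)" by (rule powr_realpow) simp
  moreover have "(2::real) powr (log 2 ?X) = ?X" using X e by simp
  ultimately have "?X \<le> 2 ^ (2 * k)" by simp
  then have "(1 / (2 * ?e))\<^sup>2 \<le> (2 ^ k)\<^sup>2" unfolding X by (simp add: power_mult[symmetric] mult.commute)
  then have "1 / (2 * ?e) \<le> 2 ^ k" by (rule power2_le_imp_le) simp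
  moreover have "dons_eta T D (dons_N T D) = ?e * 2 ^ k" by (simp add: dons_N_def k_def dons_eta_def)
  ultimately show ?thesis using e by (simp add: field_simps)
qed

lemma dons_N_le:
  assumes T: "2 \<le> T" and D: "1 \<le> D"
  shows "real (dons_N T D) \<le> 2 + (1/2) * log 2 (2 * D / (ln 2)\<^sup>2) + ln (real T) / ln 2"
proof -
  let ?X = "2 * D * (real T)\<^sup>2 / (ln (real T))\<^sup>2"
  have lT: "ln 2 \<le> ln (real T)" using T by simp
  have "?X \<le> (2 * D / (ln 2)\<^sup>2) * (real T)\<^sup>2"
    using lT T D by (simp add: divide_left_mono power_mono)
  moreover have "0 < ?X" using T D by simp
  ultimately have "log 2 ?X \<le> log 2 ((2 * D / (ln 2)\<^sup>2) * (real T)\<^sup>2)" by simp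
  also have "\<dots> = log 2 (2 * D / (ln 2)\<^sup>2) + log 2 ((real T)\<^sup>2)"
    by (rule log_mult_pos) (use T D in auto)
  also have "log 2 ((real T)\<^sup>2) = 2 * log 2 (real T)" by (simp add: log_nat_power)
  finally have "log 2 ?X \<le> log 2 (2 * D / (ln 2)\<^sup>2) + 2 * log 2 (real T)" .
  moreover have "0 \<le> log 2 ?X"
  proof -
    have "1 / (2 * dons_eta T D 1) > 1" using dons_eta_1_lt[OF T D] dons_eta_pos[OF T, of D 1] D by simp
    moreover have "?X = (1 / (2 * dons_eta T D 1))\<^sup>2"
      using T D by (simp add: dons_eta_def power_divide power_mult_distrib field_simps)
    ultimately have "1 \<le> ?X" by (simp add: one_le_power)
    then show ?thesis by simp
  qed
  ultimately show ?thesis by (simp add: dons_N_def log_def) linarith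
qed

lemma ln_one_plus_div_dons_eta_le:
  assumes T: "2 \<le> T" and D: "1 \<le> D"
  shows "ln (1 + G\<^sup>2 / dons_eta T D i) \<le> ln (1 + 2 * G\<^sup>2 * sqrt (2 * D) / ln 2) + ln (real T)"
proof -
  let ?K = "1 + 2 * G\<^sup>2 * sqrt (2 * D) / ln 2"
  have "G\<^sup>2 / dons_eta T D i \<le> G\<^sup>2 / dons_eta T D 1"
    using dons_eta_1_le[OF T, of D i] dons_eta_pos[OF T, of D 1] dons_eta_pos[OF T, of D i] D
    by (intro divide_left_mono) auto
  also have "\<dots> = 2 * G\<^sup>2 * sqrt (2 * D) * real T / ln (real T)"
    using T D by (simp add: dons_eta_def field_simps)
  also have "\<dots> \<le> 2 * G\<^sup>2 * sqrt (2 * D) * real T / ln 2"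
    using T D by (intro divide_left_mono) auto
  finally have "1 + G\<^sup>2 / dons_eta T D i \<le> ?K * real T"
    using T by (simp add: algebra_simps)
  moreover have "0 < 1 + G\<^sup>2 / dons_eta T D i" using dons_eta_pos[OF T, of D i] D by (simp add: add_pos_nonneg)
  moreover have "0 < ?K" using D by (simp add: add_pos_nonneg)
  ultimately show ?thesis using T by (simp add: ln_mult flip: ln_le_cancel_iff)
qed

lemma doubling_grid_bracket:
  fixes e :: "nat \<Rightarrow> real"
  assumes double: "\<And>i. 1 \<le> i \<Longrightarrow> e (Suc i) = 2 * e i" and "1 \<le> N" "0 \<le> s" "s < e N"
  shows "\<exists>i\<in>{1..N}. e i \<le> max s (e 1) \<and> s < 2 * e i"
proof -
  let ?I = "{i\<in>{1..N}. e i \<le> max s (e 1)}"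
  define i where "i = Max ?I"
  have fin: "finite ?I" by simp
  have "1 \<in> ?I" using assms(2) by simp
  then have i: "i \<in> ?I" unfolding i_def using Max_in[OF fin] by blast
  have imax: "\<And>j. j \<in> ?I \<Longrightarrow> j \<le> i" unfolding i_def using Max_ge[OF fin] by blast
  have "s < 2 * e i"
  proof (cases "i = N")
    case True
    then show ?thesis using assms(3,4) by simp
  next
    case False
    then have "Suc i \<in> {1..N}" using i by auto
    moreover have "Suc i \<notin> ?I" using imax by fastforce
    ultimately show ?thesis using double[of i] i by auto
  qed
  then show ?thesis using i by blast
qed

section \<open>Regret of the ensemble\<close>

lemma dons_grid_bracket:
  assumes T: "2 \<le> T" and D: "1 \<le> D" and V: "0 \<le> V" and small: "sqrt (real T * V) < real T / 2"
  defines "M \<equiv> max (ln (real T)) (sqrt (real T * V))"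
  shows "\<exists>i\<in>{1..dons_N T D}. dons_eta T D i \<le> 1/2 \<and>
    real T * dons_eta T D i \<le> M \<and> V \<le> M \<and> V / dons_eta T D i \<le> 2 * M"
proof -
  define s where "s = sqrt (real T * V) / real T"
  have s: "0 \<le> s" "s < 1/2" using V T small by (auto simp: s_def divide_less_eq)
  have Ts: "real T * s = sqrt (real T * V)" using T by (simp add: s_def)
  have Vs: "V = real T * s * s"
  proof -
    have "(real T * s)\<^sup>2 = real T * V" unfolding Ts using V by simp
    then show ?thesis using T by (simp add: power2_eq_square field_simps)
  qed
  have "s < dons_eta T D (dons_N T D)" using s dons_eta_N_ge[OF T D] by linarith
  moreover have "1 \<le> dons_N T D" by (simp add: dons_N_def)
  ultimately obtain i where i: "i \<in> {1..dons_N T D}" and upper: "dons_eta T D i \<le> max s (dons_eta T D 1)"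
    and lower: "s < 2 * dons_eta T D i"
    using doubling_grid_bracket[of "dons_eta T D", OF dons_eta_Suc _ s(1)] by blast
  let ?e = "dons_eta T D i"
  have e: "0 < ?e" using dons_eta_pos[OF T] D by simp
  have "real T * ?e \<le> real T * max s (dons_eta T D 1)" using upper by (intro mult_left_mono) auto
  also have "\<dots> \<le> M" using mult_dons_eta_1_le[OF T D] Ts by (auto simp: M_def max_def)
  finally have "real T * ?e \<le> M" .
  moreover have "V \<le> M"
  proof -
    have "V \<le> real T * s * 1" unfolding Vs using s T by (intro mult_left_mono) auto
    then show ?thesis using Ts by (simp add: M_def)
  qed
  moreover have "V / ?e \<le> 2 * M"
  proof -
    have "V \<le> real T * s * (2 * ?e)" unfolding Vs using s T lower by (intro mult_left_mono) auto
    then have "V / ?e \<le> 2 * (real T * s)" using e by (simp add: divide_le_eq algebra_simps)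
    then show ?thesis using Ts by (simp add: M_def)
  qed
  moreover have "?e \<le> 1/2" using upper s dons_eta_1_lt[OF T D] by simp
  ultimately show ?thesis using i by auto
qed

lemma ln_dons_N_Suc_le:
  assumes "2 \<le> T" "1 \<le> D"
  shows "ln (real (dons_N T D) + 1) \<le> \<bar>2 + (1/2) * log 2 (2 * D / (ln 2)\<^sup>2)\<bar> + ln (real T) / ln 2"
  using ln_add_one_self_le_self[of "real (dons_N T D)"] dons_N_le[OF assms] by (simp add: add.commute)

definition dons_regret_offset :: "nat \<Rightarrow> real \<Rightarrow> real \<Rightarrow> real \<Rightarrow> real \<Rightarrow> real" where
  "dons_regret_offset n \<alpha> G D \<eta> =
     2 * G * D + 2 * \<eta> * D\<^sup>2 + (ln (fact n) + real n * ln (1 + 2 * G\<^sup>2 * sqrt (2 * D) / ln 2)) / (2 * \<eta>)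
     + 2 * \<bar>2 + (1/2) * log 2 (2 * D / (ln 2)\<^sup>2)\<bar> / \<alpha>"

definition dons_regret_slope :: "nat \<Rightarrow> real \<Rightarrow> real \<Rightarrow> real \<Rightarrow> real \<Rightarrow> real" where
  "dons_regret_slope n \<alpha> G D \<eta> =
     2 * \<eta> * D * (real n)\<^sup>2 * (1 + 2 * G\<^sup>2) + 3 * real n / (2 * \<eta>) + 2 / (\<alpha> * ln 2)"

definition dons_regret_constant :: "nat \<Rightarrow> real \<Rightarrow> real \<Rightarrow> real \<Rightarrow> real \<Rightarrow> real" where
  "dons_regret_constant n \<alpha> G D \<eta> =
     dons_regret_offset n \<alpha> G D \<eta> / ln 2 + dons_regret_slope n \<alpha> G D \<eta> + 4 * G * D"

locale dons_ensemble = exp_concave_game S f g \<alpha> \<eta> G D T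
  for S :: "(real^'n) set" and f g \<alpha> \<eta> G D T +
  fixes ths :: "nat \<Rightarrow> nat \<Rightarrow> real^'n"
  assumes horizon: "2 \<le> T" and D_ge_1: "1 \<le> D"
    and runs: "\<And>i. i \<in> {1..dons_N T D} \<Longrightarrow> dons_run S g \<eta> (dons_gamma T D i) T (ths i)"
begin

lemma expert_in_S: "i \<in> {1..dons_N T D} \<Longrightarrow> t \<in> {1..T} \<Longrightarrow> ths i t \<in> S"
  using dons_run_in_S[OF runs] by blast

lemma gradient_bound_nonneg: "0 \<le> G"
proof -
  have "ths 1 1 \<in> S" using horizon by (intro expert_in_S) (auto simp: dons_N_def)
  then show ?thesis using gradient_le[of 1] horizon by (auto intro: order_trans[OF norm_ge_zero])
qed

lemma mix_play_in_S: "t \<in> {1..T} \<Longrightarrow> mix_play \<alpha> (dons_N T D) f ths t \<in> S"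
  by (intro mix_play_in convex_S expert_in_S) (auto simp: dons_N_def)

lemma expert_regret_le:
  assumes i: "i \<in> {1..dons_N T D}" and e2: "dons_eta T D i \<le> 1/2"
    and eT: "real T * dons_eta T D i \<le> M" and VM: "V \<le> M" and Ve: "V / dons_eta T D i \<le> 2 * M"
    and lnT: "ln (real T) \<le> M"
    and z: "\<And>t. t \<in> {1..T} \<Longrightarrow> z t \<in> S" and path: "(\<Sum>t=2..T. norm (z t - z (t - 1))) \<le> V"
  shows "(\<Sum>t=1..T. f t (ths i t) - f t (z t)) \<le>
    2 * G * D + 2 * \<eta> * D\<^sup>2 + (ln (fact CARD('n)) + real CARD('n) * ln (1 + 2 * G\<^sup>2 * sqrt (2 * D) / ln 2)) / (2 * \<eta>)
    + (2 * \<eta> * D * (real CARD('n))\<^sup>2 * (1 + 2 * G\<^sup>2) + 3 * real CARD('n) / (2 * \<eta>)) * M"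
proof -
  let ?e = "dons_eta T D i" and ?n = "real CARD('n)"
  let ?L = "1 + G\<^sup>2 / ?e" and ?K = "1 + 2 * G\<^sup>2 * sqrt (2 * D) / ln 2"
  let ?P = "\<Sum>t=2..T. norm (z t - z (t - 1))"
  have e: "0 < ?e" using dons_eta_pos[OF horizon] D_ge_1 by simp
  have \<gamma>: "dons_gamma T D i = 1 - ?e" by (simp add: dons_gamma_def)
  interpret expert: dons_expert S f g \<alpha> \<eta> G D T "dons_gamma T D i" "ths i"
    by unfold_locales (use runs[OF i] e e2 in \<open>simp_all add: dons_gamma_def\<close>)
  have regret: "(\<Sum>t=1..T. f t (ths i t) - f t (z t)) \<le> 2 * G * D + 2 * \<eta> * D\<^sup>2
     + 2 * \<eta> * D * ?L * ?n\<^sup>2 * ?P + (ln (fact CARD('n)) + ?n * ln ?L - T * ?n * ln (1 - ?e)) / (2 * \<eta>)"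
    using expert.dons_regret[OF _ z] horizon by (simp add: \<gamma>)
  have "?L * ?P \<le> ?L * V" using path e by (intro mult_left_mono) auto
  also have "\<dots> = V + G\<^sup>2 * (V / ?e)" by (simp add: algebra_simps)
  also have "\<dots> \<le> M + G\<^sup>2 * (2 * M)" using VM Ve by (intro add_mono mult_left_mono) auto
  finally have "2 * \<eta> * D * ?n\<^sup>2 * (?L * ?P) \<le> 2 * \<eta> * D * ?n\<^sup>2 * ((1 + 2 * G\<^sup>2) * M)"
    using eta_pos D_ge_1 by (intro mult_left_mono) (auto simp: algebra_simps)
  then have drift: "2 * \<eta> * D * ?L * ?n\<^sup>2 * ?P \<le> 2 * \<eta> * D * ?n\<^sup>2 * (1 + 2 * G\<^sup>2) * M"
    by (simp only: mult_ac)
  have "ln ?L \<le> ln ?K + M" using ln_one_plus_div_dons_eta_le[OF horizon D_ge_1, of G i] lnT by linarith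
  then have "?n * ln ?L \<le> ?n * (ln ?K + M)" by (intro mult_left_mono) auto
  moreover have "- (T * ?n * ln (1 - ?e)) \<le> ?n * (2 * M)"
  proof -
    have "real T * (- ln (1 - ?e)) \<le> real T * (2 * ?e)"
      using neg_ln_one_minus_le e e2 by (intro mult_left_mono) auto
    then have "?n * (real T * (- ln (1 - ?e))) \<le> ?n * (2 * M)" using eT by (intro mult_left_mono) auto
    then show ?thesis by (simp add: mult_ac)
  qed
  ultimately have "(ln (fact CARD('n)) + ?n * ln ?L - T * ?n * ln (1 - ?e)) / (2 * \<eta>)
      \<le> (ln (fact CARD('n)) + ?n * ln ?K + 3 * ?n * M) / (2 * \<eta>)"
    using eta_pos by (intro divide_right_mono) (auto simp: algebra_simps)
  also have "\<dots> = (ln (fact CARD('n)) + ?n * ln ?K) / (2 * \<eta>) + 3 * ?n / (2 * \<eta>) * M"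
    by (simp add: add_divide_distrib)
  finally show ?thesis using regret drift unfolding distrib_right by linarith
qed

lemma exists_expert_regret_le:
  assumes z: "\<And>t. t \<in> {1..T} \<Longrightarrow> z t \<in> S" and path: "(\<Sum>t=2..T. norm (z t - z (t - 1))) \<le> V"
    and small: "sqrt (real T * V) < real T / 2"
  defines "M \<equiv> max (ln (real T)) (sqrt (real T * V))"
  shows "\<exists>i\<in>{1..dons_N T D}. (\<Sum>t=1..T. f t (ths i t) - f t (z t)) \<le>
    2 * G * D + 2 * \<eta> * D\<^sup>2 + (ln (fact CARD('n)) + real CARD('n) * ln (1 + 2 * G\<^sup>2 * sqrt (2 * D) / ln 2)) / (2 * \<eta>)
    + (2 * \<eta> * D * (real CARD('n))\<^sup>2 * (1 + 2 * G\<^sup>2) + 3 * real CARD('n) / (2 * \<eta>)) * M"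
proof -
  have "0 \<le> V" using path order_trans[OF sum_nonneg] by (metis norm_ge_zero)
  with dons_grid_bracket[OF horizon D_ge_1 _ small] obtain i where "i \<in> {1..dons_N T D}"
    and "dons_eta T D i \<le> 1/2" "real T * dons_eta T D i \<le> M" "V \<le> M" "V / dons_eta T D i \<le> 2 * M"
    unfolding M_def by blast
  moreover have "ln (real T) \<le> M" by (simp add: M_def)
  ultimately show ?thesis using expert_regret_le z path by blast
qed

lemma regret_le_of_small_path:
  assumes z: "\<And>t. t \<in> {1..T} \<Longrightarrow> z t \<in> S" and path: "(\<Sum>t=2..T. norm (z t - z (t - 1))) \<le> V"
    and small: "sqrt (real T * V) < real T / 2"
  defines "M \<equiv> max (ln (real T)) (sqrt (real T * V))"
  shows "(\<Sum>t=1..T. f t (mix_play \<alpha> (dons_N T D) f ths t) - f t (z t))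
    \<le> dons_regret_offset CARD('n) \<alpha> G D \<eta> + dons_regret_slope CARD('n) \<alpha> G D \<eta> * M"
proof -
  let ?N = "dons_N T D" and ?c = "\<bar>2 + (1/2) * log 2 (2 * D / (ln 2)\<^sup>2)\<bar>"
  obtain i where i: "i \<in> {1..?N}" and expert: "(\<Sum>t=1..T. f t (ths i t) - f t (z t)) \<le>
    2 * G * D + 2 * \<eta> * D\<^sup>2 + (ln (fact CARD('n)) + real CARD('n) * ln (1 + 2 * G\<^sup>2 * sqrt (2 * D) / ln 2)) / (2 * \<eta>)
    + (2 * \<eta> * D * (real CARD('n))\<^sup>2 * (1 + 2 * G\<^sup>2) + 3 * real CARD('n) / (2 * \<eta>)) * M"
    using exists_expert_regret_le[OF z path small] unfolding M_def by blast
  have \<alpha>: "0 < \<alpha>" using eta_pos eta_le_alpha by simp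
  have "(\<Sum>t=1..T. f t (mix_play \<alpha> ?N f ths t)) \<le> (\<Sum>t=1..T. f t (ths i t)) + 2 * ln (real ?N + 1) / \<alpha>"
    by (rule mix_play_regret[OF _ \<alpha> convex_S exp_concave expert_in_S i]) (auto simp: dons_N_def)
  moreover have "2 * ln (real ?N + 1) / \<alpha> \<le> 2 * (?c + M / ln 2) / \<alpha>"
  proof -
    have "ln (real T) / ln 2 \<le> M / ln 2" by (intro divide_right_mono) (auto simp: M_def)
    then have "ln (real ?N + 1) \<le> ?c + M / ln 2" using ln_dons_N_Suc_le[OF horizon D_ge_1] by linarith
    then show ?thesis using \<alpha> by (intro divide_right_mono mult_left_mono) auto
  qed
  moreover have "2 * (?c + M / ln 2) / \<alpha> = 2 * ?c / \<alpha> + 2 / (\<alpha> * ln 2) * M"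
    using \<alpha> by (simp add: field_simps)
  ultimately show ?thesis using expert
    unfolding dons_regret_offset_def dons_regret_slope_def distrib_right sum_subtractf by linarith
qed

lemma regret_le_of_large_path:
  assumes z: "\<And>t. t \<in> {1..T} \<Longrightarrow> z t \<in> S" and large: "real T / 2 \<le> sqrt (real T * V)"
  shows "(\<Sum>t=1..T. f t (mix_play \<alpha> (dons_N T D) f ths t) - f t (z t))
    \<le> 4 * G * D * max (ln (real T)) (sqrt (real T * V))"
proof -
  have "0 \<le> G" by (rule gradient_bound_nonneg)
  then have "2 * G * D * T \<le> 2 * G * D * (2 * sqrt (real T * V))"
    using large D_ge_1 by (intro mult_left_mono) auto
  also have "\<dots> \<le> 4 * G * D * max (ln (real T)) (sqrt (real T * V))"
    using \<open>0 \<le> G\<close> D_ge_1 by (simp add: mult_left_mono)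
  finally show ?thesis
    using regret_le_trivial[of "mix_play \<alpha> (dons_N T D) f ths" z, OF mix_play_in_S z] by linarith
qed

theorem ensemble_regret_le:
  assumes z: "\<And>t. t \<in> {1..T} \<Longrightarrow> z t \<in> S" and path: "(\<Sum>t=2..T. norm (z t - z (t - 1))) \<le> V"
  shows "(\<Sum>t=1..T. f t (mix_play \<alpha> (dons_N T D) f ths t) - f t (z t))
    \<le> dons_regret_constant CARD('n) \<alpha> G D \<eta> * max (ln (real T)) (sqrt (real T * V))"
proof -
  let ?M = "max (ln (real T)) (sqrt (real T * V))"
  let ?A = "dons_regret_offset CARD('n) \<alpha> G D \<eta>" and ?B = "dons_regret_slope CARD('n) \<alpha> G D \<eta>"
  have M: "ln 2 \<le> ?M" using horizon by (simp add: le_max_iff_disj)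
  have \<alpha>: "0 < \<alpha>" using eta_pos eta_le_alpha by simp
  have "0 \<le> ln (1 + 2 * G\<^sup>2 * sqrt (2 * D) / ln 2)" using D_ge_1 by simp
  then have A: "0 \<le> ?A"
    unfolding dons_regret_offset_def using gradient_bound_nonneg D_ge_1 eta_pos \<alpha> by simp
  have B: "0 \<le> ?B"
    unfolding dons_regret_slope_def using eta_pos \<alpha> D_ge_1 by (intro add_nonneg_nonneg) auto
  have "?A = ?A / ln 2 * ln 2" by simp
  also have "\<dots> \<le> ?A / ln 2 * ?M" using A M by (intro mult_left_mono) auto
  finally have "?A + ?B * ?M \<le> (?A / ln 2 + ?B) * ?M" by (simp add: distrib_right)
  have "0 \<le> 4 * G * D * ?M" and "0 \<le> (?A / ln 2 + ?B) * ?M"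
    using gradient_bound_nonneg D_ge_1 A B M by (auto intro!: mult_nonneg_nonneg order_trans[OF _ M])
  consider (small) "sqrt (real T * V) < real T / 2" | (large) "real T / 2 \<le> sqrt (real T * V)"
    by linarith
  then show ?thesis
  proof cases
    case small
    then show ?thesis
      using regret_le_of_small_path[of z V, OF z path] \<open>?A + ?B * ?M \<le> _\<close> \<open>0 \<le> 4 * G * D * ?M\<close>
      unfolding dons_regret_constant_def distrib_right by linarith
  next
    case large
    then show ?thesis
      using regret_le_of_large_path[of z V, OF z] \<open>0 \<le> (?A / ln 2 + ?B) * ?M\<close>
      unfolding dons_regret_constant_def distrib_right by linarith
  qed
qed

end

lemma dons_ensembleI:
  fixes S :: "(real^'n) set"
  assumes "0 < \<eta>" "\<eta> \<le> (1/2) * min (1 / (4 * G * D)) \<alpha>" "0 < G" "1 \<le> D" "2 \<le> T"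
    and "convex S" "\<forall>x\<in>S. norm x \<le> D"
    and "\<forall>t\<in>{1..T}. concave_on S (\<lambda>x. exp (- \<alpha> * f t x)) \<and>
       (\<forall>x\<in>S. (f t has_derivative (\<lambda>h. g t x \<bullet> h)) (at x within S) \<and> norm (g t x) \<le> G)"
    and "\<forall>i\<in>{1..dons_N T D}. dons_run S g \<eta> (dons_gamma T D i) T (ths i)"
  shows "dons_ensemble S f g \<alpha> \<eta> G D T ths"
proof -
  have "2 * \<eta> \<le> 1 / (4 * G * D)" and "2 * \<eta> \<le> \<alpha>" using assms(2) by auto
  then have "8 * \<eta> * G * D \<le> 1" using assms(3,4) by (simp add: field_simps)
  then show ?thesis
    using assms \<open>2 * \<eta> \<le> \<alpha>\<close>
    by (simp add: dons_ensemble_def dons_ensemble_axioms_def exp_concave_game_def)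
qed

theorem theorem3p7:
  fixes \<alpha> G D \<eta> :: real
  assumes "\<alpha> > 0" and "G > 0" and "D \<ge> 1" and "\<eta> > 0"
    and "\<eta> \<le> (1/2) * min (1 / (4 * G * D)) \<alpha>"
  shows "\<exists>C::real. \<forall>(T::nat) (S :: (real ^ 'n) set) (f :: nat \<Rightarrow> real ^ 'n \<Rightarrow> real)
      (g :: nat \<Rightarrow> real ^ 'n \<Rightarrow> real ^ 'n) (ths :: nat \<Rightarrow> nat \<Rightarrow> real ^ 'n)
      (z :: nat \<Rightarrow> real ^ 'n) (V :: real).
    T \<ge> 2 \<and> compact S \<and> convex S \<and> (\<forall>x\<in>S. norm x \<le> D) \<and>
    (\<forall>t\<in>{1..T}. convex_on S (f t) \<and> concave_on S (\<lambda>x. exp (- \<alpha> * f t x)) \<and>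
       (\<forall>x\<in>S. (f t has_derivative (\<lambda>h. g t x \<bullet> h)) (at x within S) \<and> norm (g t x) \<le> G)) \<and>
    (\<forall>i\<in>{1..dons_N T D}. dons_run S g \<eta> (dons_gamma T D i) T (ths i)) \<and>
    (\<forall>t\<in>{1..T}. z t \<in> S) \<and> (\<Sum>t=2..T. norm (z t - z (t - 1))) \<le> V
    \<longrightarrow> (\<Sum>t=1..T. f t (mix_play \<alpha> (dons_N T D) f ths t) - f t (z t))
          \<le> C * max (ln (real T)) (sqrt (real T * V))"
  by (intro exI[of _ "dons_regret_constant CARD('n) \<alpha> G D \<eta>"] allI impI, elim conjE,
      rule dons_ensemble.ensemble_regret_le[OF dons_ensembleI[OF assms(4,5,2,3)]]) auto

end
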